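(* Let $N\ge1$, $1=a_0<a_1<\cdots<a_N$, $\mathbf a=(a_1,\dots,a_N)$. Then $$m(\mathbf{a})\le \frac{a_N}{\min_{0\le k<N}(a_{k+1}-a_k)}.$$
   Context: $m(\mathbf{a})=\min\{m\in\mathbb{N}: \sum_{k=0}^{N-1}(a_k/a_N)^m<1\}$, where $a_0=1$. *)

theory Defs
  imports Complex_Main
begin

text \<open>m(a) = min { m in N : sum_{k=0}^{N-1} (a_k / a_N)^m < 1 }, with a_0 = 1.
  The sequence is given as a function a :: nat => real, only a 0, ..., a N matter.\<close>
definition m_of :: "(nat \<Rightarrow> real) \<Rightarrow> nat \<Rightarrow> nat" where
  "m_of a N = (LEAST m::nat. (\<Sum>k<N. (a k / a N) ^ m) < 1)"

end

theory Submission
  imports Defs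
begin

(* Let d be the smallest gap a(k+1) - a(k), x = a(N)/d > 1 and m = floor x.
   Since every gap is at least d, a(k) <= a(N) - (N-k) d, i.e. a(k)/a(N) <= 1 - (N-k)/x,
   and by Bernoulli's inequality this is at most (1 - 1/x)^(N-k).  Raising to the m-th
   power and using (1 - 1/x)^m <= (m/(m+1))^m <= 1/2 gives (a(k)/a(N))^m <= 2^-(N-k),
   so the sum over k < N is below the geometric sum 1/2 + ... + 2^-N < 1.  Hence
   m(a) <= m <= x = a(N)/d. *)

lemma one_minus_mult_le_power:
  fixes t :: real
  assumes "t \<le> 1"
  shows "1 - real n * t \<le> (1 - t) ^ n"
  using Bernoulli_inequality[of "- t" n] assms by simp

text \<open>(m/(m+1))^m \<le> 1/2, since its reciprocal (1 + 1/m)^m is at least 2 by Bernoulli.\<close>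
lemma ratio_power_le_half:
  assumes "m \<ge> 1"
  shows "(real m / (real m + 1)) ^ m \<le> 1 / 2"
proof -
  have m_pos: "real m > 0" using assms by simp
  have "1 + real m * (1 / real m) \<le> (1 + 1 / real m) ^ m"
    by (rule Bernoulli_inequality) (auto intro: order_trans[of _ 0])
  then have two_le: "2 \<le> (1 + 1 / real m) ^ m" using m_pos by simp
  have "1 + 1 / real m = (real m + 1) / real m"
    using m_pos by (simp add: field_simps)
  then have "real m / (real m + 1) * (1 + 1 / real m) = 1"
    using m_pos by simp
  then have product: "(real m / (real m + 1)) ^ m * (1 + 1 / real m) ^ m = 1"
    by (metis power_mult_distrib power_one)
  have "(real m / (real m + 1)) ^ m * 2 \<le> 1"
    using mult_left_mono[OF two_le, of "(real m / (real m + 1)) ^ m"] product by simp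
  then show ?thesis by simp
qed

lemma one_minus_inverse_power_floor_le_half:
  fixes x :: real
  assumes "1 \<le> x"
  shows "(1 - 1 / x) ^ nat \<lfloor>x\<rfloor> \<le> 1 / 2"
proof -
  define m where "m = nat \<lfloor>x\<rfloor>"
  have m_ge: "m \<ge> 1" and x_lt: "x < real m + 1"
    unfolding m_def using assms by linarith+
  have "1 - 1 / x \<le> real m / (real m + 1)"
    using assms x_lt by (simp add: field_simps)
  moreover have "0 \<le> 1 - 1 / x" using assms by simp
  ultimately have "(1 - 1 / x) ^ m \<le> (real m / (real m + 1)) ^ m"
    by (intro power_mono)
  also have "\<dots> \<le> 1 / 2" using m_ge by (rule ratio_power_le_half)
  finally show ?thesis unfolding m_def .
qed

lemma power_floor_le_half_power:
  fixes x y :: real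
  assumes "1 \<le> x" "0 \<le> y" "y \<le> 1 - real n / x"
  shows "y ^ nat \<lfloor>x\<rfloor> \<le> (1 / 2) ^ n"
proof -
  define m where "m = nat \<lfloor>x\<rfloor>"
  have "y \<le> 1 - real n * (1 / x)" using assms(3) by simp
  also have "\<dots> \<le> (1 - 1 / x) ^ n"
    using assms(1) by (intro one_minus_mult_le_power) (simp add: field_simps)
  finally have "y ^ m \<le> ((1 - 1 / x) ^ n) ^ m"
    using assms(2) by (rule power_mono)
  also have "\<dots> = ((1 - 1 / x) ^ m) ^ n"
    by (simp add: power_mult[symmetric] mult.commute)
  also have "\<dots> \<le> (1 / 2) ^ n"
    using assms(1) one_minus_inverse_power_floor_le_half[OF assms(1)]
    by (intro power_mono) (auto simp: m_def)
  finally show ?thesis unfolding m_def .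
qed

lemma sum_half_powers_lt_one: "(\<Sum>k<N. (1 / 2 :: real) ^ (N - k)) < 1"
proof -
  have partial: "(\<Sum>i<n. (1 / 2 :: real) ^ Suc i) = 1 - (1 / 2) ^ n" for n
    by (induction n) auto
  have "(\<Sum>k<N. (1 / 2 :: real) ^ (N - k)) = (\<Sum>i<N. (1 / 2) ^ Suc (N - Suc i))"
    by (intro sum.cong) (auto simp: Suc_diff_Suc)
  also have "\<dots> = (\<Sum>i<N. (1 / 2) ^ Suc i)"
    by (rule sum.nat_diff_reindex)
  finally show ?thesis using partial[of N] by simp
qed

lemma gaps_lower_bound:
  fixes a :: "nat \<Rightarrow> real"
  assumes gaps: "\<And>k. k < N \<Longrightarrow> d \<le> a (Suc k) - a k"
    and "k \<le> j" "j \<le> N"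
  shows "a k + real (j - k) * d \<le> a j"
  using assms(2,3)
proof (induction j)
  case 0
  then show ?case by simp
next
  case (Suc j)
  show ?case
  proof (cases "k = Suc j")
    case True
    then show ?thesis by simp
  next
    case False
    then have "k \<le> j" using Suc.prems by simp
    then have "a k + real (j - k) * d \<le> a j" using Suc by simp
    moreover have "d \<le> a (Suc j) - a j" using gaps Suc.prems by simp
    moreover have "real (Suc j - k) = real (j - k) + 1" using \<open>k \<le> j\<close> by simp
    ultimately show ?thesis by (simp add: algebra_simps)
  qed
qed

lemma m_of_le:
  assumes "(\<Sum>k<N. (a k / a N) ^ m) < 1"
  shows "m_of a N \<le> m"
  unfolding m_of_def using assms by (rule Least_le)

theorem mainTheorem3:
  fixes a :: "nat \<Rightarrow> real" and N :: nat
  assumes "N \<ge> 1"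
    and "a 0 = 1"
    and "\<And>k. k < N \<Longrightarrow> a k < a (Suc k)"
  shows "real (m_of a N) \<le> a N / Min ((\<lambda>k. a (Suc k) - a k) ` {..<N})"
proof -
  define d where "d = Min ((\<lambda>k. a (Suc k) - a k) ` {..<N})"
  define x where "x = a N / d"
  have d_pos: "d > 0"
    unfolding d_def using assms(1,3) by (subst Min_gr_iff) (auto simp: lessThan_empty_iff)
  have gaps: "d \<le> a (Suc k) - a k" if "k < N" for k
    unfolding d_def using that by (intro Min_le) auto
  have growth: "a k + real (j - k) * d \<le> a j" if "k \<le> j" "j \<le> N" for j k
    using gaps_lower_bound[of N d a k j] gaps that by blast
  have a_ge_1: "a k \<ge> 1" if "k \<le> N" for k
  proof -
    have "0 \<le> real k * d" using d_pos by simp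
    then show ?thesis using growth[of 0 k] that assms(2) by simp
  qed
  have "d \<le> real N * d" using assms(1) d_pos by simp
  then have "d < a N" using growth[of 0 N] assms(2) by simp
  then have x_gt: "x > 1" using d_pos unfolding x_def by simp
  have term_bound: "(a k / a N) ^ nat \<lfloor>x\<rfloor> \<le> (1 / 2) ^ (N - k)" if "k < N" for k
  proof (rule power_floor_le_half_power)
    show "a k / a N \<le> 1 - real (N - k) / x"
      using growth[of k N] that a_ge_1[of N] d_pos unfolding x_def by (simp add: field_simps)
  qed (use x_gt a_ge_1[of k] a_ge_1[of N] that in auto)
  have "(\<Sum>k<N. (a k / a N) ^ nat \<lfloor>x\<rfloor>) \<le> (\<Sum>k<N. (1 / 2) ^ (N - k))"
    using term_bound by (intro sum_mono) simp
  also have "\<dots> < 1" by (rule sum_half_powers_lt_one)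
  finally have "(\<Sum>k<N. (a k / a N) ^ nat \<lfloor>x\<rfloor>) < 1" .
  then have "m_of a N \<le> nat \<lfloor>x\<rfloor>" by (rule m_of_le)
  then show ?thesis using x_gt unfolding x_def d_def by linarith
qed

end
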